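(* Let $k\in\mathbb Z_{\ge1}$ and $\lambda_1,\lambda_2\in\mathbb C$. Then $\widetilde{\mathrm{Sol}}_{(k,k)}(-\lambda_1,-\lambda_2)\ne\{0\}$ if and only if $(\lambda_1,\lambda_2)=(\frac12(2-k-s),\frac12(2-k+s))$ for some $s\in\mathbb C$ (equivalently $\lambda_1+\lambda_2=2-k$), and in that case $\widetilde{\mathrm{Sol}}_{(k,k)}(-\frac12(2-k-s),-\frac12(2-k+s))=\mathbb C\,p_c^{(s;k)}(t)$.
   Context: Let $\vartheta_t=t\frac d{dt}$. For $a,b,\mu\in\mathbb C$ define $D^{(a,b)}(\mu;t)=\frac d{dt}+(\mu+a-\frac b2-1)(a-\vartheta_t)+\frac14t(a-1-\vartheta_t)(a-\vartheta_t)(b-\vartheta_t)$, and $D^{(a,b)}(\mu;-t)=-\frac d{dt}+(\mu+a-\frac b2-1)(a-\vartheta_t)-\frac14t(a-1-\vartheta_t)(a-\vartheta_t)(b-\vartheta_t)$ (substitution $t\mapsto -t$). For $k,\ell\in\mathbb Z_{\ge0}$, $\widetilde{\mathrm{Sol}}_{(k,\ell)}(-\lambda_1,-\lambda_2)=\{p\in\mathbb C[t]:\deg p\le\min(k,\ell),\ D^{(k,\ell)}(\lambda_1;t)p=0,\ D^{(\ell,k)}(\lambda_2;-t)p=0\}$. Cayley continuants: $\mathrm{Cay}_0(x;y)=1$, $\mathrm{Cay}_1(x;y)=x$, and for $m\ge2$, $\mathrm{Cay}_m(x;y)$ is the determinant of the $m\times m$ tridiagonal matrix with diagonal entries all $x$,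 superdiagonal entries $1,2,\dots,m-1$ and subdiagonal entries $y,y-1,\dots,y-m+2$; equivalently $\mathrm{Cay}_m(x;y)=\sum_{j=0}^m\binom mj(\frac{x+y}2)^{\underline j}(\frac{x-y}2)^{\overline{m-j}}$ with $r^{\underline j}=r(r-1)\cdots(r-j+1)$, $r^{\overline j}=r(r+1)\cdots(r+j-1)$. Polynomial: $p_c^{(s;k)}(t)=\sum_{m=0}^k\frac1{2^m}\binom km\mathrm{Cay}_m(s;k)t^m$. *)

theory Defs
  imports "HOL-Computational_Algebra.Polynomial"
begin

definition theta :: "complex poly \<Rightarrow> complex poly" where
  "theta p = [:0, 1:] * pderiv p"

definition cminus_theta :: "complex \<Rightarrow> complex poly \<Rightarrow> complex poly" where
  "cminus_theta c p = smult c p - theta p"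

definition Dop :: "complex \<Rightarrow> complex \<Rightarrow> complex \<Rightarrow> complex poly \<Rightarrow> complex poly" where
  "Dop a b mu p = pderiv p
     + smult (mu + a - b / 2 - 1) (cminus_theta a p)
     + smult (1/4) ([:0, 1:] * cminus_theta (a - 1) (cminus_theta a (cminus_theta b p)))"

text \<open>D^{(a,b)}(mu; -t) p  (substitution t to -t; theta_t is invariant)\<close>
definition Dop_neg :: "complex \<Rightarrow> complex \<Rightarrow> complex \<Rightarrow> complex poly \<Rightarrow> complex poly" where
  "Dop_neg a b mu p = - pderiv p
     + smult (mu + a - b / 2 - 1) (cminus_theta a p)
     - smult (1/4) ([:0, 1:] * cminus_theta (a - 1) (cminus_theta a (cminus_theta b p)))"

text \<open>Sol_tilde k l lam1 lam2 denotes the paper's widetilde Sol_{(k,l)}(-lam1,-lam2).\<close>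
definition Sol_tilde :: "nat \<Rightarrow> nat \<Rightarrow> complex \<Rightarrow> complex \<Rightarrow> complex poly set" where
  "Sol_tilde k l lam1 lam2 = {p. degree p \<le> min k l
      \<and> Dop (of_nat k) (of_nat l) lam1 p = 0
      \<and> Dop_neg (of_nat l) (of_nat k) lam2 p = 0}"

definition falling :: "complex \<Rightarrow> nat \<Rightarrow> complex" where
  "falling r j = (\<Prod>i<j. r - of_nat i)"

definition rising :: "complex \<Rightarrow> nat \<Rightarrow> complex" where
  "rising r j = (\<Prod>i<j. r + of_nat i)"

text \<open>Cayley continuant via the closed sum formula.\<close>
definition Cay :: "nat \<Rightarrow> complex \<Rightarrow> complex \<Rightarrow> complex" where
  "Cay m x y = (\<Sum>j\<le>m. of_nat (m choose j) * falling ((x + y) / 2) j * rising ((x - y) / 2) (m - j))"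

definition pc :: "complex \<Rightarrow> nat \<Rightarrow> complex poly" where
  "pc s k = (\<Sum>m\<le>k. monom (1 / 2 ^ m * of_nat (k choose m) * Cay m s (of_nat k)) m)"

end

theory Submission
  imports Defs
begin

(* Comparing coefficients, D^{(k,k)}(lam;t) p = 0 is a three-term recurrence expressing
   p_{n+1} through p_n and p_{n-1}, so a solution is determined by its constant term; moreover
   D^{(k,k)}(lam1;t) + D^{(k,k)}(lam2;-t) = (lam1 + lam2 + k - 2)(k - theta_t).
   If lam1 + lam2 <> 2 - k, a common solution is therefore killed by k - theta_t, i.e. it is
   c t^k, and D^{(k,k)}(lam1;t) maps c t^k to k c t^(k-1), so c = 0.  If lam1 + lam2 = 2 - k,
   the two equations coincide up to sign, and p_c^{(s;k)} solves them because the Cayley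
   continuants satisfy Cay_{m+2} = s Cay_{m+1} - (m+1)(k-m) Cay_m. *)

lemma falling_Suc: "falling r (Suc j) = falling r j * (r - of_nat j)"
  by (simp add: falling_def)

lemma rising_Suc: "rising r (Suc j) = rising r j * (r + of_nat j)"
  by (simp add: rising_def)

lemma Cay_0: "Cay 0 x y = 1"
  by (simp add: Cay_def falling_def rising_def)

lemma Cay_Suc_0: "Cay (Suc 0) x y = x"
  by (simp add: Cay_def falling_def rising_def field_simps)

lemma sum_choose_Suc_mult_diff:
  fixes h :: "nat \<Rightarrow> 'a::comm_semiring_1"
  shows "(\<Sum>j\<le>Suc m. of_nat (Suc m choose j) * of_nat (Suc m - j) * h j)
       = of_nat (Suc m) * (\<Sum>j\<le>m. of_nat (m choose j) * h j)"
proof -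
  have absorb: "of_nat (Suc m choose j) * of_nat (Suc m - j) = (of_nat (Suc m) * of_nat (m choose j) :: 'a)" for j
    using binomial_absorb_comp[of "Suc m" j] by (metis diff_Suc_1 mult.commute of_nat_mult)
  have "(\<Sum>j\<le>Suc m. of_nat (Suc m choose j) * of_nat (Suc m - j) * h j)
      = (\<Sum>j\<le>m. of_nat (Suc m choose j) * of_nat (Suc m - j) * h j)"
    by simp
  then show ?thesis by (simp only: absorb sum_distrib_left mult.assoc)
qed

lemma sum_choose_Suc_mult_index:
  fixes h :: "nat \<Rightarrow> 'a::comm_semiring_1"
  shows "(\<Sum>j\<le>Suc m. of_nat (Suc m choose j) * of_nat j * h j)
       = of_nat (Suc m) * (\<Sum>j\<le>m. of_nat (m choose j) * h (Suc j))"
proof -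
  have absorb: "of_nat (Suc m choose Suc j) * of_nat (Suc j) = (of_nat (Suc m) * of_nat (m choose j) :: 'a)" for j
    by (metis Suc_times_binomial mult.commute of_nat_mult)
  have "(\<Sum>j\<le>Suc m. of_nat (Suc m choose j) * of_nat j * h j)
      = (\<Sum>j\<le>m. of_nat (Suc m choose Suc j) * of_nat (Suc j) * h (Suc j))"
    by (subst sum.atMost_Suc_shift) simp
  then show ?thesis by (simp only: absorb sum_distrib_left mult.assoc)
qed

lemma Cay_Suc_eq_sum:
  "Cay (Suc m) x y = (\<Sum>j\<le>m. of_nat (m choose j) * falling ((x + y) / 2) j
      * rising ((x - y) / 2) (m - j) * (x + of_nat (m - j) - of_nat j))"
proof -
  define F where "F = falling ((x + y) / 2)"
  define R where "R = rising ((x - y) / 2)"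
  define h where "h j = F j * R (Suc m - j)" for j
  have "of_nat (Suc m) * Cay (Suc m) x y
     = (\<Sum>j\<le>Suc m. of_nat (Suc m choose j) * of_nat (Suc m - j) * h j)
       + (\<Sum>j\<le>Suc m. of_nat (Suc m choose j) * of_nat j * h j)"
    unfolding Cay_def sum.distrib[symmetric] sum_distrib_left
    by (rule sum.cong[OF refl]) (auto simp: h_def F_def R_def algebra_simps of_nat_diff simp flip: of_nat_add)
  also have "\<dots> = of_nat (Suc m) * (\<Sum>j\<le>m. of_nat (m choose j) * (h j + h (Suc j)))"
    unfolding sum_choose_Suc_mult_diff sum_choose_Suc_mult_index
    by (simp add: sum.distrib distrib_left)
  also have "(\<Sum>j\<le>m. of_nat (m choose j) * (h j + h (Suc j)))
     = (\<Sum>j\<le>m. of_nat (m choose j) * F j * R (m - j) * (x + of_nat (m - j) - of_nat j))"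
  proof (rule sum.cong[OF refl])
    fix j assume "j \<in> {..m}"
    then have "Suc m - j = Suc (m - j)" by simp
    then show "of_nat (m choose j) * (h j + h (Suc j))
        = of_nat (m choose j) * F j * R (m - j) * (x + of_nat (m - j) - of_nat j)"
      by (simp add: h_def F_def R_def falling_Suc rising_Suc field_simps)
  qed
  finally show ?thesis unfolding F_def R_def by (simp del: of_nat_Suc)
qed

lemma Cay_Suc_Suc:
  "Cay (Suc (Suc m)) x y = x * Cay (Suc m) x y - of_nat (Suc m) * (y - of_nat m) * Cay m x y"
proof -
  define F where "F = falling ((x + y) / 2)"
  define R where "R = rising ((x - y) / 2)"
  define h where "h j = F j * R (Suc m - j)" for j
  have "Cay (Suc (Suc m)) x y - x * Cay (Suc m) x y
     = (\<Sum>j\<le>Suc m. of_nat (Suc m choose j) * of_nat (Suc m - j) * h j)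
       - (\<Sum>j\<le>Suc m. of_nat (Suc m choose j) * of_nat j * h j)"
    unfolding Cay_Suc_eq_sum[of "Suc m"] Cay_def[of "Suc m"] sum_distrib_left sum_subtractf[symmetric]
    by (rule sum.cong[OF refl]) (auto simp: h_def F_def R_def algebra_simps)
  also have "\<dots> = of_nat (Suc m) * (\<Sum>j\<le>m. of_nat (m choose j) * (h j - h (Suc j)))"
    unfolding sum_choose_Suc_mult_diff sum_choose_Suc_mult_index
    by (simp add: sum_subtractf right_diff_distrib)
  also have "(\<Sum>j\<le>m. of_nat (m choose j) * (h j - h (Suc j)))
     = (\<Sum>j\<le>m. of_nat (m choose j) * F j * R (m - j) * (of_nat m - y))"
  proof (rule sum.cong[OF refl])
    fix j assume "j \<in> {..m}"
    then have "j \<le> m" "Suc m - j = Suc (m - j)" by simp_all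
    then show "of_nat (m choose j) * (h j - h (Suc j)) = of_nat (m choose j) * F j * R (m - j) * (of_nat m - y)"
      by (simp add: h_def F_def R_def falling_Suc rising_Suc field_simps of_nat_diff)
  qed
  also have "\<dots> = (of_nat m - y) * Cay m x y"
    unfolding Cay_def sum_distrib_left F_def R_def by (rule sum.cong[OF refl]) (simp add: algebra_simps)
  finally show ?thesis by (simp add: algebra_simps)
qed

lemma coeff_cminus_theta: "coeff (cminus_theta c p) n = (c - of_nat n) * coeff p n"
  by (cases n) (simp_all add: cminus_theta_def theta_def coeff_pderiv algebra_simps)

lemma cminus_theta_monom: "cminus_theta c (monom d n) = monom ((c - of_nat n) * d) n"
  by (rule poly_eqI) (simp add: coeff_cminus_theta)

lemma cminus_theta_zero [simp]: "cminus_theta c 0 = 0"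
  by (simp add: cminus_theta_def theta_def)

lemma coeff_Dop_0:
  "coeff (Dop a b mu p) 0 = coeff p 1 + (mu + a - b / 2 - 1) * a * coeff p 0"
  by (simp add: Dop_def coeff_cminus_theta coeff_pderiv)

lemma coeff_Dop_Suc:
  "coeff (Dop a b mu p) (Suc n) = of_nat (Suc (Suc n)) * coeff p (Suc (Suc n))
     + (mu + a - b / 2 - 1) * (a - of_nat (Suc n)) * coeff p (Suc n)
     + (a - 1 - of_nat n) * (a - of_nat n) * (b - of_nat n) * coeff p n / 4"
  by (simp add: Dop_def coeff_cminus_theta coeff_pderiv del: of_nat_Suc)

lemma cminus_theta_smult: "cminus_theta c (smult d p) = smult d (cminus_theta c p)"
  by (rule poly_eqI) (simp add: coeff_cminus_theta)

lemma Dop_smult: "Dop a b mu (smult c p) = smult c (Dop a b mu p)"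
  by (simp add: Dop_def cminus_theta_smult pderiv_smult smult_add_right mult_smult_right smult_smult mult.commute)

lemma Dop_zero: "Dop a b mu 0 = 0"
  by (simp add: Dop_def)

lemma Dop_neg_zero: "Dop_neg a b mu 0 = 0"
  by (simp add: Dop_neg_def)

lemma Dop_add_Dop_neg:
  "Dop a a mu1 p + Dop_neg a a mu2 p = smult (mu1 + mu2 + a - 2) (cminus_theta a p)"
proof -
  define T where "T = cminus_theta a p"
  define U where "U = smult (1/4) ([:0, 1:] * cminus_theta (a - 1) (cminus_theta a T))"
  have "Dop a a mu1 p + Dop_neg a a mu2 p = smult (mu1 + a - a / 2 - 1) T + smult (mu2 + a - a / 2 - 1) T"
    unfolding Dop_def Dop_neg_def T_def[symmetric] U_def[symmetric] by simp
  also have "\<dots> = smult (mu1 + mu2 + a - 2) T"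
    by (simp only: smult_add_left[symmetric]) (rule arg_cong[where f = "\<lambda>c. smult c T"], simp)
  finally show ?thesis unfolding T_def .
qed

lemma Dop_monom:
  "Dop (of_nat k) (of_nat k) mu (monom c k) = monom (of_nat k * c) (k - 1)"
  by (simp add: Dop_def pderiv_monom cminus_theta_monom)

lemma cminus_theta_eq_0_imp_monom:
  assumes "cminus_theta (of_nat k) p = 0"
  shows "p = monom (coeff p k) k"
proof (rule poly_eqI)
  fix n
  have "(of_nat k - of_nat n) * coeff p n = (0::complex)"
    using arg_cong[OF assms, of "\<lambda>q. coeff q n"] by (simp add: coeff_cminus_theta)
  then show "coeff p n = coeff (monom (coeff p k) k) n" by auto
qed

lemma Dop_solution_unique:
  assumes "Dop a b mu p = 0" and "Dop a b mu q = 0" and "coeff p 0 = coeff q 0"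
  shows "p = q"
proof -
  have "coeff p n = coeff q n \<and> coeff p (Suc n) = coeff q (Suc n)" for n
  proof (induction n)
    case 0
    have "coeff (Dop a b mu p) 0 = coeff (Dop a b mu q) 0" using assms(1,2) by simp
    then show ?case using assms(3) by (simp add: coeff_Dop_0)
  next
    case (Suc n)
    have "coeff (Dop a b mu p) (Suc n) = coeff (Dop a b mu q) (Suc n)" using assms(1,2) by simp
    then have "of_nat (Suc (Suc n)) * coeff p (Suc (Suc n)) = of_nat (Suc (Suc n)) * coeff q (Suc (Suc n))"
      using Suc.IH by (simp add: coeff_Dop_Suc del: of_nat_Suc)
    then show ?case using Suc.IH by (simp del: of_nat_Suc)
  qed
  then show ?thesis by (simp add: poly_eq_iff)
qed

lemma coeff_pc: "coeff (pc s k) n = of_nat (k choose n) * Cay n s (of_nat k) / 2 ^ n"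
proof -
  have "coeff (pc s k) n = (\<Sum>m\<le>k. if m = n then 1 / 2 ^ m * of_nat (k choose m) * Cay m s (of_nat k) else 0)"
    by (simp add: pc_def coeff_sum)
  also have "\<dots> = of_nat (k choose n) * Cay n s (of_nat k) / 2 ^ n"
    by (simp add: sum.delta')
  finally show ?thesis .
qed

lemma coeff_pc_0: "coeff (pc s k) 0 = 1"
  by (simp add: coeff_pc Cay_0)

lemma degree_pc: "degree (pc s k) \<le> k"
  by (rule degree_le) (simp add: coeff_pc)

lemma Suc_mult_choose_Suc:
  "(of_nat (Suc m) * of_nat (k choose Suc m) :: 'a::comm_ring_1) = (of_nat k - of_nat m) * of_nat (k choose m)"
proof (cases "m \<le> k")
  case True
  have "Suc m * (k choose Suc m) = (k - m) * (k choose m)"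
    by (metis binomial_absorb_comp binomial_absorption)
  then show ?thesis using True by (metis of_nat_diff of_nat_mult)
next
  case False
  then show ?thesis by (simp add: binomial_eq_0)
qed

lemma Dop_pc: "Dop (of_nat k) (of_nat k) ((2 - of_nat k - s) / 2) (pc s k) = 0"
proof (rule poly_eqI)
  fix n
  show "coeff (Dop (of_nat k) (of_nat k) ((2 - of_nat k - s) / 2) (pc s k)) n = coeff 0 n"
  proof (cases n)
    case 0
    then show ?thesis by (simp add: coeff_Dop_0 coeff_pc Cay_0 Cay_Suc_0 field_simps)
  next
    case (Suc m)
    define Y where "Y j = Cay j s (of_nat k)" for j
    \<comment> \<open>By (j+1) C(k,j+1) = (k-j) C(k,j), each term of the coefficient is K times a term of the Cayley recurrence.\<close>
    define K :: complex where "K = (of_nat k - of_nat m - 1) * of_nat (k choose Suc m) / (4 * 2 ^ m)"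
    have "of_nat (Suc (Suc m)) * coeff (pc s k) (Suc (Suc m))
        = of_nat (Suc (Suc m)) * of_nat (k choose Suc (Suc m)) * Y (Suc (Suc m)) / (4 * 2 ^ m)"
      by (simp add: coeff_pc Y_def)
    also have "\<dots> = K * Y (Suc (Suc m))"
      unfolding Suc_mult_choose_Suc K_def by (simp add: algebra_simps)
    finally have at_Suc_Suc: "of_nat (Suc (Suc m)) * coeff (pc s k) (Suc (Suc m)) = K * Y (Suc (Suc m))" .
    have at_Suc: "(of_nat k - of_nat (Suc m)) * coeff (pc s k) (Suc m) = 2 * K * Y (Suc m)"
      by (simp add: coeff_pc Y_def K_def field_simps)
    have "(of_nat k - 1 - of_nat m) * (of_nat k - of_nat m) * (of_nat k - of_nat m) * coeff (pc s k) m
        = (of_nat k - 1 - of_nat m) * (of_nat k - of_nat m) * ((of_nat k - of_nat m) * of_nat (k choose m)) * Y m / 2 ^ m"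
      by (simp add: coeff_pc Y_def)
    also have "\<dots> = 4 * K * of_nat (Suc m) * (of_nat k - of_nat m) * Y m"
      unfolding Suc_mult_choose_Suc[symmetric] K_def by (simp add: field_simps)
    finally have at_m: "(of_nat k - 1 - of_nat m) * (of_nat k - of_nat m) * (of_nat k - of_nat m) * coeff (pc s k) m
        = 4 * K * of_nat (Suc m) * (of_nat k - of_nat m) * Y m" .
    have "coeff (Dop (of_nat k) (of_nat k) ((2 - of_nat k - s) / 2) (pc s k)) n
        = of_nat (Suc (Suc m)) * coeff (pc s k) (Suc (Suc m))
          - s / 2 * ((of_nat k - of_nat (Suc m)) * coeff (pc s k) (Suc m))
          + (of_nat k - 1 - of_nat m) * (of_nat k - of_nat m) * (of_nat k - of_nat m) * coeff (pc s k) m / 4"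
      unfolding Suc coeff_Dop_Suc by (simp add: field_simps)
    also have "\<dots> = K * (Y (Suc (Suc m)) - s * Y (Suc m) + of_nat (Suc m) * (of_nat k - of_nat m) * Y m)"
      unfolding at_Suc_Suc at_Suc at_m by (simp add: field_simps)
    also have "\<dots> = 0"
      by (simp add: Y_def Cay_Suc_Suc)
    finally show ?thesis by simp
  qed
qed

lemma Sol_tilde_on_line:
  "Sol_tilde k k ((2 - of_nat k - s) / 2) ((2 - of_nat k + s) / 2) = range (\<lambda>c. smult c (pc s k))"
  (is "Sol_tilde k k ?lam1 ?lam2 = _")
proof -
  have "?lam1 + ?lam2 + of_nat k - 2 = 0" by (simp add: field_simps)
  then have Dop_neg_eq: "Dop_neg (of_nat k) (of_nat k) ?lam2 p = - Dop (of_nat k) (of_nat k) ?lam1 p" for p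
    using Dop_add_Dop_neg[of "of_nat k" ?lam1 p ?lam2] by (simp add: eq_neg_iff_add_eq_0 add.commute)
  have Dop_pc_smult: "Dop (of_nat k) (of_nat k) ?lam1 (smult c (pc s k)) = 0" for c
    by (simp add: Dop_smult Dop_pc)
  show ?thesis
  proof (intro equalityI subsetI)
    fix p assume "p \<in> Sol_tilde k k ?lam1 ?lam2"
    then have "Dop (of_nat k) (of_nat k) ?lam1 p = 0" by (simp add: Sol_tilde_def)
    then have "p = smult (coeff p 0) (pc s k)"
      using Dop_pc_smult by (rule Dop_solution_unique) (simp add: coeff_pc_0)
    then show "p \<in> range (\<lambda>c. smult c (pc s k))" by blast
  next
    fix p assume "p \<in> range (\<lambda>c. smult c (pc s k))"
    then obtain c where p: "p = smult c (pc s k)" by blast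
    have "degree p \<le> k" unfolding p using degree_pc[of s k] degree_smult_le[of c "pc s k"] by linarith
    then show "p \<in> Sol_tilde k k ?lam1 ?lam2"
      by (simp add: Sol_tilde_def Dop_neg_eq p Dop_pc_smult)
  qed
qed

lemma Sol_tilde_off_line:
  assumes "k \<ge> 1" and "lam1 + lam2 \<noteq> 2 - of_nat k"
  shows "Sol_tilde k k lam1 lam2 = {0}"
proof -
  have "p = 0" if "p \<in> Sol_tilde k k lam1 lam2" for p
  proof -
    have D: "Dop (of_nat k) (of_nat k) lam1 p = 0" "Dop_neg (of_nat k) (of_nat k) lam2 p = 0"
      using that by (simp_all add: Sol_tilde_def)
    have "smult (lam1 + lam2 + of_nat k - 2) (cminus_theta (of_nat k) p) = 0"
      using Dop_add_Dop_neg[of "of_nat k" lam1 p lam2] D by simp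
    with assms(2) have "cminus_theta (of_nat k) p = 0" by (simp add: algebra_simps)
    then have p: "p = monom (coeff p k) k" by (rule cminus_theta_eq_0_imp_monom)
    have "monom (of_nat k * coeff p k) (k - 1) = 0"
      using D(1) by (subst (asm) p) (simp only: Dop_monom)
    with assms(1) have "coeff p k = 0" by simp
    with p show "p = 0" by simp
  qed
  moreover have "0 \<in> Sol_tilde k k lam1 lam2" by (simp add: Sol_tilde_def Dop_zero Dop_neg_zero)
  ultimately show ?thesis by blast
qed

lemma ex_symmetric_split_iff:
  fixes c x y :: complex
  shows "(\<exists>s. x = (c - s) / 2 \<and> y = (c + s) / 2) \<longleftrightarrow> x + y = c"
proof
  assume "x + y = c"
  then show "\<exists>s. x = (c - s) / 2 \<and> y = (c + s) / 2"
    by (intro exI[of _ "y - x"]) (simp add: field_simps)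
next
  assume "\<exists>s. x = (c - s) / 2 \<and> y = (c + s) / 2"
  then obtain s where x: "x = (c - s) / 2" and y: "y = (c + s) / 2" by blast
  show "x + y = c" unfolding x y by (simp add: field_simps)
qed

lemma Sol_tilde_ne_zero_iff:
  assumes "k \<ge> 1"
  shows "Sol_tilde k k lam1 lam2 \<noteq> {0} \<longleftrightarrow> lam1 + lam2 = 2 - of_nat k"
proof (cases "lam1 + lam2 = 2 - of_nat k")
  case True
  then obtain s where "lam1 = (2 - of_nat k - s) / 2" "lam2 = (2 - of_nat k + s) / 2"
    using ex_symmetric_split_iff by blast
  then have "pc s k \<in> Sol_tilde k k lam1 lam2"
    using Sol_tilde_on_line[of k s] by (metis rangeI smult_1_left)
  moreover have "pc s k \<noteq> 0" using coeff_pc_0[of s k] by auto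
  ultimately show ?thesis using True by blast
qed (simp add: Sol_tilde_off_line[OF assms])

theorem proposition6p4:
  fixes k :: nat and lam1 lam2 :: complex
  assumes "k \<ge> 1"
  shows "(Sol_tilde k k lam1 lam2 \<noteq> {0} \<longleftrightarrow>
           (\<exists>s. lam1 = (2 - of_nat k - s) / 2 \<and> lam2 = (2 - of_nat k + s) / 2))
     \<and> (\<forall>s. Sol_tilde k k ((2 - of_nat k - s) / 2) ((2 - of_nat k + s) / 2)
              = range (\<lambda>c. smult c (pc s k)))"
  using Sol_tilde_ne_zero_iff[OF assms] ex_symmetric_split_iff[of lam1 "2 - of_nat k" lam2]
    Sol_tilde_on_line
  by simp

end
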